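(* Let $(\mathfrak{h},[\cdot,\cdot])$ be a finite-dimensional real left Leibniz algebra with center $Z(\mathfrak{h})=\{a\in\mathfrak{h}:[a,\mathfrak{h}]=[\mathfrak{h},a]=0\}$ and derived subspace $[\mathfrak{h},\mathfrak{h}]$ (the span of all brackets). Choose a scalar product $\langle\cdot,\cdot\rangle$ on $\mathfrak{h}$, vectors $a_1,b_1,\ldots,a_k,b_k\in[\mathfrak{h},\mathfrak{h}]^\perp\cap Z(\mathfrak{h})^\perp$, vectors $z_1,\ldots,z_k\in Z(\mathfrak{h})$, and smooth functions $f_1,\ldots,f_k:\mathbb{R}\to\mathbb{R}$ with $f_j(0)=0$ for all $j$. Then \[x\rhd y=\exp(\mathrm{ad}_x)(y)+\sum_{j=1}^k\langle y,b_j\rangle f_j(\langle x,a_j\rangle)z_j\] is a linear Lie rack operation on $\mathfrak{h}$ pointed at $0$. Moreover, if $f_j'(0)=0$ for $j=1,\ldots,k$, then $[\cdot,\cdot]_{\rhd}=[\cdot,\cdot]$.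
   Context: A left Leibniz algebra is a vector space with bilinear bracket satisfying $[u,[v,w]]=[[u,v],w]+[v,[u,w]]$; $\mathrm{ad}_x(y)=[x,y]$. A rack is a set with $\rhd$ such that each $\mathrm{L}_a:b\mapsto a\rhd b$ is bijective and $a\rhd(b\rhd c)=(a\rhd b)\rhd(a\rhd c)$; it is pointed at $e$ if $a\rhd e=e$ for all $a$ and $\mathrm{L}_e=\mathrm{Id}$. A Lie rack requires a smooth manifold, $\rhd$ smooth and the $\mathrm{L}_a$ diffeomorphisms. A linear Lie rack operation on a vector space is a Lie rack operation pointed at $0$ with every $\mathrm{L}_x$ linear. Its associated bracket is $[u,v]_{\rhd}=\frac{d}{dt}\big|_{t=0}\mathrm{L}_{c(t)}(v)$ for a smooth curve $c$ with $c(0)=0$, $c'(0)=u$. *)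

theory Defs
  imports "HOL-Analysis.Analysis"
begin

definition left_leibniz :: "('a::real_vector \<Rightarrow> 'a \<Rightarrow> 'a) \<Rightarrow> bool" where
  "left_leibniz br \<longleftrightarrow> bilinear br \<and>
     (\<forall>u v w. br u (br v w) = br (br u v) w + br v (br u w))"

definition center :: "('a::real_vector \<Rightarrow> 'a \<Rightarrow> 'a) \<Rightarrow> 'a set" where
  "center br = {a. \<forall>h. br a h = 0 \<and> br h a = 0}"

definition derived :: "('a::real_vector \<Rightarrow> 'a \<Rightarrow> 'a) \<Rightarrow> 'a set" where
  "derived br = span {br u v | u v. True}"

definition scalar_product :: "('a::real_vector \<Rightarrow> 'a \<Rightarrow> real) \<Rightarrow> bool" where
  "scalar_product sp \<longleftrightarrow> bilinear sp \<and> (\<forall>x y. sp x y = sp y x) \<and>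
     (\<forall>x. x \<noteq> 0 \<longrightarrow> sp x x > 0)"

definition orth :: "('a \<Rightarrow> 'a \<Rightarrow> real) \<Rightarrow> 'a set \<Rightarrow> 'a set" where
  "orth sp S = {x. \<forall>y\<in>S. sp x y = 0}"

definition exp_ad :: "('a::real_normed_vector \<Rightarrow> 'a \<Rightarrow> 'a) \<Rightarrow> 'a \<Rightarrow> 'a \<Rightarrow> 'a" where
  "exp_ad br x y = (\<Sum>n. (1 / fact n) *\<^sub>R ((br x ^^ n) y))"

text \<open>Smooth (C-infinity) maps between normed spaces: Frechet derivatives of all orders
  exist everywhere; D vs x is the iterated derivative of f at x in directions vs.\<close>
definition smooth :: "('a::real_normed_vector \<Rightarrow> 'b::real_normed_vector) \<Rightarrow> bool" where
  "smooth f \<longleftrightarrow> (\<exists>D :: 'a list \<Rightarrow> 'a \<Rightarrow> 'b. (\<forall>x. D [] x = f x) \<and>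
     (\<forall>vs x. (D vs has_derivative (\<lambda>v. D (v # vs) x)) (at x)))"

definition rack :: "('a \<Rightarrow> 'a \<Rightarrow> 'a) \<Rightarrow> bool" where
  "rack op \<longleftrightarrow> (\<forall>a. bij (op a)) \<and> (\<forall>a b c. op a (op b c) = op (op a b) (op a c))"

definition pointed_at :: "('a \<Rightarrow> 'a \<Rightarrow> 'a) \<Rightarrow> 'a \<Rightarrow> bool" where
  "pointed_at op e \<longleftrightarrow> (\<forall>a. op a e = e) \<and> op e = id"

definition lie_rack :: "('a::real_normed_vector \<Rightarrow> 'a \<Rightarrow> 'a) \<Rightarrow> bool" where
  "lie_rack op \<longleftrightarrow> rack op \<and> smooth (\<lambda>p::'a \<times> 'a. op (fst p) (snd p)) \<and>
     (\<forall>a. smooth (op a) \<and> smooth (inv (op a)))"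

definition linear_lie_rack :: "('a::real_normed_vector \<Rightarrow> 'a \<Rightarrow> 'a) \<Rightarrow> bool" where
  "linear_lie_rack op \<longleftrightarrow> lie_rack op \<and> pointed_at op 0 \<and> (\<forall>x. linear (op x))"

definition is_rack_bracket :: "('a::real_normed_vector \<Rightarrow> 'a \<Rightarrow> 'a) \<Rightarrow> ('a \<Rightarrow> 'a \<Rightarrow> 'a) \<Rightarrow> bool" where
  "is_rack_bracket op br \<longleftrightarrow> (\<forall>u v (c::real \<Rightarrow> 'a). smooth c \<and> c 0 = 0 \<and>
     (c has_vector_derivative u) (at 0) \<longrightarrow>
     ((\<lambda>t. op (c t) v) has_vector_derivative br u v) (at 0))"

end

theory Submission
  imports Defs
begin

text \<open>
  Since the left Leibniz identity says that every \<open>ad\<^sub>x\<close> is a derivation, \<open>exp(ad\<^sub>x)\<close> is an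
  automorphism of the bracket; hence \<open>exp(ad\<^bsub>exp(ad\<^sub>x) y\<^esub>) \<circ> exp(ad\<^sub>x) = exp(ad\<^sub>x) \<circ> exp(ad\<^sub>y)\<close>,
  which is self-distributivity of \<open>x \<rhd> y = exp(ad\<^sub>x) y\<close>, and \<open>exp(ad\<^bsub>-x\<^esub>)\<close> inverts \<open>exp(ad\<^sub>x)\<close>.
  The twist \<open>\<Sum>\<^sub>j \<langle>y,b\<^sub>j\<rangle> f\<^sub>j(\<langle>x,a\<^sub>j\<rangle>) z\<^sub>j\<close> is central, so it is fixed by every \<open>exp(ad)\<close>
  and does not change \<open>ad\<close>; and as \<open>a\<^sub>j, b\<^sub>j\<close> are orthogonal to the derived algebra and to the
  centre, the functionals \<open>\<langle>-,a\<^sub>j\<rangle>, \<langle>-,b\<^sub>j\<rangle>\<close> are invariant under the operation, so the twist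
  never sees the difference between \<open>y\<close> and \<open>x \<rhd> y\<close>.
  Smoothness of \<open>(x, y) \<mapsto> exp(ad\<^sub>x) y\<close> comes from differentiating its power series termwise:
  the iterated derivatives of \<open>ad\<^sub>x\<^sup>n y\<close>, given by the Leibniz rule, are dominated by a
  convergent series. At \<open>x = 0\<close> only the term \<open>ad\<^sub>x y\<close> is linear in \<open>x\<close>, and the twist contributes
  \<open>f\<^sub>j'(0) = 0\<close>, so the bracket of the rack is the original one.
\<close>

section \<open>Derivative towers and smooth maps\<close>

definition derivative_tower :: "('a::real_normed_vector list \<Rightarrow> 'a \<Rightarrow> 'b::real_normed_vector) \<Rightarrow> bool" where
  "derivative_tower D \<longleftrightarrow> (\<forall>vs x. (D vs has_derivative (\<lambda>v. D (v # vs) x)) (at x))"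

lemma smooth_iff_derivative_tower: "smooth f \<longleftrightarrow> (\<exists>D. derivative_tower D \<and> D [] = f)"
  unfolding smooth_def derivative_tower_def by (metis ext)

lemma smoothI: "derivative_tower D \<Longrightarrow> D [] = f \<Longrightarrow> smooth f"
  unfolding smooth_iff_derivative_tower by blast

lemma smoothE:
  assumes "smooth f" obtains D where "derivative_tower D" "D [] = f"
  using assms unfolding smooth_iff_derivative_tower by blast

definition linear_tower :: "('a \<Rightarrow> 'b::real_normed_vector) \<Rightarrow> 'a list \<Rightarrow> 'a \<Rightarrow> 'b" where
  "linear_tower l vs x = (case vs of [] \<Rightarrow> l x | [v] \<Rightarrow> l v | _ \<Rightarrow> 0)"

lemma linear_tower_simps [simp]:
  "linear_tower l [] = l"
  "linear_tower l [v] = (\<lambda>x. l v)"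
  "linear_tower l (v # w # ws) = (\<lambda>x. 0)"
  by (auto simp: linear_tower_def)

lemma derivative_tower_linear_tower:
  assumes "bounded_linear l" shows "derivative_tower (linear_tower l)"
  unfolding derivative_tower_def
proof (intro allI)
  fix vs :: "'a list" and x
  show "(linear_tower l vs has_derivative (\<lambda>v. linear_tower l (v # vs) x)) (at x)"
    using assms by (cases vs rule: remdups_adj.cases) (auto intro: bounded_linear_imp_has_derivative)
qed

lemma derivative_tower_compose_left:
  assumes "derivative_tower D" "bounded_linear g"
  shows "derivative_tower (\<lambda>vs x. g (D vs x))"
  using assms bounded_linear.has_derivative unfolding derivative_tower_def by blast

lemma derivative_tower_compose_right:
  assumes D: "derivative_tower D" and l: "bounded_linear l"
  shows "derivative_tower (\<lambda>vs x. D (map l vs) (l x))"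
  unfolding derivative_tower_def
proof (intro allI)
  fix vs x
  have "(D (map l vs) has_derivative (\<lambda>v. D (v # map l vs) (l x))) (at (l x))"
    using D unfolding derivative_tower_def by blast
  from diff_chain_at[OF bounded_linear_imp_has_derivative[OF l] this]
  show "((\<lambda>x. D (map l vs) (l x)) has_derivative (\<lambda>v. D (map l (v # vs)) (l x))) (at x)"
    by (simp add: o_def)
qed

lemma derivative_tower_sum:
  assumes "\<And>i. i \<in> I \<Longrightarrow> derivative_tower (D i)"
  shows "derivative_tower (\<lambda>vs x. \<Sum>i\<in>I. D i vs x)"
  using assms unfolding derivative_tower_def by (auto intro!: has_derivative_sum)

lemma derivative_tower_append:
  "derivative_tower D \<Longrightarrow> derivative_tower (\<lambda>us. D (us @ [w]))"
  unfolding derivative_tower_def by simp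

text \<open>The Leibniz rule for \<open>x \<mapsto> pr (f x) (g x)\<close>. Here the directions are listed in the order
  of differentiation, the reverse of the convention of \<^const>\<open>derivative_tower\<close>.\<close>
fun product_tower ::
  "('b \<Rightarrow> 'c \<Rightarrow> 'd::real_normed_vector) \<Rightarrow> ('a list \<Rightarrow> 'a \<Rightarrow> 'b) \<Rightarrow> ('a list \<Rightarrow> 'a \<Rightarrow> 'c) \<Rightarrow> 'a list \<Rightarrow> 'a \<Rightarrow> 'd"
where
  "product_tower pr Df Dg [] x = pr (Df [] x) (Dg [] x)"
| "product_tower pr Df Dg (w # ws) x =
     product_tower pr (\<lambda>us. Df (us @ [w])) Dg ws x + product_tower pr Df (\<lambda>us. Dg (us @ [w])) ws x"

lemma has_derivative_product_tower:
  assumes pr: "bounded_bilinear pr" and "derivative_tower Df" "derivative_tower Dg"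
  shows "(product_tower pr Df Dg ws has_derivative (\<lambda>v. product_tower pr Df Dg (ws @ [v]) x)) (at x)"
  using assms(2,3)
proof (induction ws arbitrary: Df Dg)
  case Nil
  have "(Df [] has_derivative (\<lambda>v. Df [v] x)) (at x)" "(Dg [] has_derivative (\<lambda>v. Dg [v] x)) (at x)"
    using Nil unfolding derivative_tower_def by blast+
  from bounded_bilinear.FDERIV[OF pr this] show ?case
    by (simp add: add.commute)
next
  case (Cons w ws)
  have "(product_tower pr (\<lambda>us. Df (us @ [w])) Dg ws has_derivative
      (\<lambda>v. product_tower pr (\<lambda>us. Df (us @ [w])) Dg (ws @ [v]) x)) (at x)"
    by (rule Cons.IH[OF derivative_tower_append[OF Cons.prems(1)] Cons.prems(2)])
  moreover have "(product_tower pr Df (\<lambda>us. Dg (us @ [w])) ws has_derivative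
      (\<lambda>v. product_tower pr Df (\<lambda>us. Dg (us @ [w])) (ws @ [v]) x)) (at x)"
    by (rule Cons.IH[OF Cons.prems(1) derivative_tower_append[OF Cons.prems(2)]])
  ultimately show ?case
    by (simp add: has_derivative_add)
qed

lemma derivative_tower_product_tower:
  assumes "bounded_bilinear pr" "derivative_tower Df" "derivative_tower Dg"
  shows "derivative_tower (\<lambda>vs. product_tower pr Df Dg (rev vs))"
  unfolding derivative_tower_def using has_derivative_product_tower[OF assms] by simp

lemma norm_product_tower_le:
  assumes K: "0 \<le> K" "\<And>u v. norm (pr u v) \<le> norm u * norm v * K"
    and "\<And>us. norm (Df us x) \<le> A * s ^ length us * prod_list (map norm us)"
    and "\<And>us. norm (Dg us x) \<le> C * t ^ length us * prod_list (map norm us)"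
  shows "norm (product_tower pr Df Dg ws x) \<le> K * A * C * (s + t) ^ length ws * prod_list (map norm ws)"
  using assms(3,4)
proof (induction ws arbitrary: Df Dg A C)
  case Nil
  have "norm (Df [] x) \<le> A" "norm (Dg [] x) \<le> C"
    using Nil[of "[]"] by simp_all
  then have "norm (Df [] x) * norm (Dg [] x) * K \<le> A * C * K"
    using K(1) order_trans[OF norm_ge_zero] by (intro mult_right_mono mult_mono) auto
  then show ?case
    using K(2)[of "Df [] x" "Dg [] x"] by (simp add: ac_simps)
next
  case (Cons w ws)
  let ?P = "(s + t) ^ length ws * prod_list (map norm ws)"
  have "norm (product_tower pr (\<lambda>us. Df (us @ [w])) Dg ws x)
      \<le> K * (A * s * norm w) * C * (s + t) ^ length ws * prod_list (map norm ws)"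
    by (rule Cons.IH) (use Cons.prems(1)[of "_ @ [w]"] Cons.prems(2) in \<open>simp_all add: ac_simps\<close>)
  moreover have "norm (product_tower pr Df (\<lambda>us. Dg (us @ [w])) ws x)
      \<le> K * A * (C * t * norm w) * (s + t) ^ length ws * prod_list (map norm ws)"
    by (rule Cons.IH) (use Cons.prems(2)[of "_ @ [w]"] Cons.prems(1) in \<open>simp_all add: ac_simps\<close>)
  ultimately have "norm (product_tower pr Df Dg (w # ws) x)
      \<le> K * (A * s * norm w) * C * ?P + K * A * (C * t * norm w) * ?P"
    by (auto simp: mult.assoc intro: order_trans[OF norm_triangle_ineq])
  then show ?case
    by (simp add: algebra_simps)
qed

text \<open>The factor \<open>1 ^ length us\<close> puts the bound in the shape required by
  \<open>norm_product_tower_le\<close>.\<close>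
lemma norm_linear_tower_le:
  assumes "bounded_linear l" "\<And>v. norm (l v) \<le> norm v" "norm p \<le> \<rho>" "1 \<le> \<rho>"
  shows "norm (linear_tower l us p) \<le> \<rho> * 1 ^ length us * prod_list (map norm us)"
proof (cases us rule: remdups_adj.cases)
  case (2 v)
  then show ?thesis
    using assms(2)[of v] assms(4) order_trans[OF _ mult_right_mono[of 1 \<rho> "norm v"]] by force
next
  case (3 v w ws)
  then show ?thesis
    using assms(4) by (auto intro!: mult_nonneg_nonneg prod_list_nonneg)
qed (use assms order_trans in auto)

lemma eventually_norm_suminf_tail_le:
  fixes F :: "nat \<Rightarrow> 'i \<Rightarrow> 'b::banach"
  assumes M: "summable M" and F: "\<And>n i. i \<in> I \<Longrightarrow> norm (F n i) \<le> M n * c i"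
    and c: "\<And>i. i \<in> I \<Longrightarrow> 0 \<le> c i" and e: "e > 0"
  shows "\<forall>\<^sub>F n in sequentially. \<forall>i\<in>I. norm ((\<Sum>m<n. F m i) - (\<Sum>m. F m i)) \<le> e * c i"
proof -
  have "\<forall>\<^sub>F n in sequentially. dist (\<Sum>m<n. M m) (suminf M) < e"
    using tendstoD[OF summable_LIMSEQ[OF M] e] .
  then show ?thesis
  proof (rule eventually_mono, intro ballI)
    fix n i assume n: "dist (\<Sum>m<n. M m) (suminf M) < e" and i: "i \<in> I"
    have MF: "summable (\<lambda>m. M (m + n) * c i)"
      using summable_ignore_initial_segment[OF M] by (rule summable_mult2)
    have "summable (\<lambda>m. F m i)"
      by (rule summable_comparison_test'[OF summable_mult2[OF M]]) (use F i in blast)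
    then have "norm ((\<Sum>m<n. F m i) - (\<Sum>m. F m i)) = norm (\<Sum>m. F (m + n) i)"
      by (simp add: suminf_split_initial_segment[of _ n] norm_minus_commute)
    also have "\<dots> \<le> (\<Sum>m. M (m + n) * c i)"
      by (rule norm_suminf_le[OF _ MF]) (use F i in blast)
    also have "\<dots> = (suminf M - (\<Sum>m<n. M m)) * c i"
      by (simp add: suminf_mult2[OF summable_ignore_initial_segment[OF M], symmetric]
          suminf_split_initial_segment[OF M, of n])
    also have "\<dots> \<le> e * c i"
      using n c[OF i] by (intro mult_right_mono) (auto simp: dist_real_def)
    finally show "norm ((\<Sum>m<n. F m i) - (\<Sum>m. F m i)) \<le> e * c i" .
  qed
qed

lemma has_derivative_suminf_dominated:
  fixes F :: "nat \<Rightarrow> 'a::real_normed_vector \<Rightarrow> 'b::banach"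
  assumes S: "open S" "convex S" "x \<in> S"
    and F: "\<And>n y. y \<in> S \<Longrightarrow> (F n has_derivative F' n y) (at y)"
    and M: "summable M" "\<And>n y h. y \<in> S \<Longrightarrow> norm (F' n y h) \<le> M n * norm h"
    and "summable (\<lambda>n. F n x)"
  shows "((\<lambda>y. \<Sum>n. F n y) has_derivative (\<lambda>h. \<Sum>n. F' n x h)) (at x)"
proof -
  have "\<exists>g. \<forall>y\<in>S. (\<lambda>n. F n y) sums g y \<and> (g has_derivative (\<lambda>h. \<Sum>n. F' n y h)) (at y within S)"
  proof (intro has_derivative_series summable_sums)
    show "\<forall>\<^sub>F n in sequentially. \<forall>y\<in>S. \<forall>h. norm ((\<Sum>i<n. F' i y h) - (\<Sum>n. F' n y h)) \<le> e * norm h"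
      if "e > 0" for e
    proof -
      have "\<forall>\<^sub>F n in sequentially. \<forall>i\<in>S \<times> UNIV.
          norm ((\<Sum>m<n. F' m (fst i) (snd i)) - (\<Sum>m. F' m (fst i) (snd i))) \<le> e * norm (snd i)"
        by (rule eventually_norm_suminf_tail_le[OF M(1) _ _ that]) (auto simp: M(2))
      then show ?thesis
        by (rule eventually_mono) auto
    qed
  qed (use S F assms(7) in \<open>auto intro: has_derivative_at_withinI\<close>)
  then obtain g where g: "\<And>y. y \<in> S \<Longrightarrow> (\<lambda>n. F n y) sums g y"
    "(g has_derivative (\<lambda>h. \<Sum>n. F' n x h)) (at x within S)"
    using S(3) by blast
  have "(g has_derivative (\<lambda>h. \<Sum>n. F' n x h)) (at x)"
    using g(2) at_within_open[OF S(3,1)] by simp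
  then show ?thesis
    by (rule has_derivative_transform_within_open[OF _ S(1,3)]) (use g(1) sums_unique in auto)
qed

lemma derivative_tower_suminf:
  fixes D :: "nat \<Rightarrow> 'a::real_normed_vector list \<Rightarrow> 'a \<Rightarrow> 'b::banach"
  assumes D: "\<And>n. derivative_tower (D n)"
    and bound: "\<And>R m. \<exists>M. summable M \<and>
      (\<forall>n x us. norm x \<le> R \<longrightarrow> length us = m \<longrightarrow> norm (D n us x) \<le> M n * prod_list (map norm us))"
  shows "derivative_tower (\<lambda>vs x. \<Sum>n. D n vs x)"
  unfolding derivative_tower_def
proof (intro allI)
  fix vs :: "'a list" and x :: 'a
  define P where "P = prod_list (map norm vs)"
  have ball: "norm y \<le> norm x + 1" if "y \<in> ball x 1" for y
    using that norm_triangle_sub[of y x] by (auto simp: dist_norm norm_minus_commute)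
  obtain M0 where M0: "summable M0" "\<And>n. norm (D n vs x) \<le> M0 n * P"
    using bound[of "norm x + 1" "length vs"] unfolding P_def by force
  obtain M1 where M1: "summable M1"
    "\<And>n y us. y \<in> ball x 1 \<Longrightarrow> length us = Suc (length vs) \<Longrightarrow> norm (D n us y) \<le> M1 n * prod_list (map norm us)"
    using bound[of "norm x + 1" "Suc (length vs)"] ball by blast
  show "((\<lambda>x. \<Sum>n. D n vs x) has_derivative (\<lambda>h. \<Sum>n. D n (h # vs) x)) (at x)"
  proof (rule has_derivative_suminf_dominated[where S="ball x 1" and M="\<lambda>n. M1 n * P"])
    show "norm (D n (h # vs) y) \<le> M1 n * P * norm h" if "y \<in> ball x 1" for n y h
      using M1(2)[OF that, of "h # vs"] by (simp add: P_def ac_simps)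
    show "summable (\<lambda>n. D n vs x)"
      by (rule summable_comparison_test'[OF summable_mult2[OF M0(1), of P]]) (use M0(2) in auto)
  qed (use D M1(1) in \<open>auto simp: derivative_tower_def intro: summable_mult2\<close>)
qed

lemma smooth_bounded_linear: "bounded_linear l \<Longrightarrow> smooth l"
  by (rule smoothI[OF derivative_tower_linear_tower]) simp_all

lemma smooth_compose_left:
  assumes "smooth g" "bounded_linear l" shows "smooth (\<lambda>x. l (g x))"
  using assms(1) by (rule smoothE) (auto intro: smoothI derivative_tower_compose_left[OF _ assms(2)])

lemma smooth_compose_right:
  assumes "smooth g" "bounded_linear l" shows "smooth (\<lambda>x. g (l x))"
  using assms(1) by (rule smoothE) (auto intro: smoothI derivative_tower_compose_right[OF _ assms(2)])

lemma smooth_sum: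
  assumes "\<And>i. i \<in> I \<Longrightarrow> smooth (g i)" shows "smooth (\<lambda>x. \<Sum>i\<in>I. g i x)"
proof -
  obtain D where D: "\<And>i. i \<in> I \<Longrightarrow> derivative_tower (D i) \<and> D i [] = g i"
    using assms unfolding smooth_iff_derivative_tower by metis
  show ?thesis
    by (rule smoothI[OF derivative_tower_sum[of I D]]) (use D in auto)
qed

lemma smooth_add:
  assumes "smooth g" "smooth h" shows "smooth (\<lambda>x. g x + h x)"
proof -
  have "smooth (\<lambda>x. \<Sum>b\<in>UNIV. (if b then g else h) x)"
    by (rule smooth_sum) (use assms in auto)
  then show ?thesis
    by (simp add: UNIV_bool add.commute)
qed

lemma smooth_bounded_bilinear:
  assumes "bounded_bilinear pr" "smooth g" "smooth h" shows "smooth (\<lambda>x. pr (g x) (h x))"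
proof -
  obtain Dg Dh where "derivative_tower Dg" "Dg [] = g" "derivative_tower Dh" "Dh [] = h"
    using assms(2,3) by (elim smoothE)
  then show ?thesis
    by (intro smoothI[OF derivative_tower_product_tower[OF assms(1)], of Dg Dh]) auto
qed

lemma smooth_imp_differentiable: "smooth g \<Longrightarrow> g differentiable (at x)"
  by (elim smoothE) (auto simp: derivative_tower_def intro: differentiableI)

section \<open>The exponential of a bounded bracket\<close>

text \<open>The square and triangle partial sums differ by at most \<open>K\<close> times the corresponding
  difference for the norms, which tends to zero by the scalar Cauchy product.\<close>
lemma bounded_bilinear_Cauchy_product_sums:
  fixes a :: "nat \<Rightarrow> 'a::banach" and b :: "nat \<Rightarrow> 'b::banach"
  assumes pr: "bounded_bilinear pr"
    and a: "summable (\<lambda>k. norm (a k))" and b: "summable (\<lambda>k. norm (b k))"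
  shows "(\<lambda>k. \<Sum>i\<le>k. pr (a i) (b (k - i))) sums pr (\<Sum>k. a k) (\<Sum>k. b k)"
proof -
  obtain K where K: "\<And>u v. norm (pr u v) \<le> norm u * norm v * K" "0 \<le> K"
    using bounded_bilinear.nonneg_bounded[OF pr] by blast
  define Sq :: "nat \<Rightarrow> (nat \<times> nat) set" where "Sq n = {..<n} \<times> {..<n}" for n
  define Tr :: "nat \<Rightarrow> (nat \<times> nat) set" where "Tr n = {(i, j). i + j < n}" for n
  have Sq: "finite (Sq n)" "Tr n \<subseteq> Sq n" for n
    by (auto simp: Sq_def Tr_def)
  have square: "(\<Sum>i<n. \<Sum>j<n. g i j) = (\<Sum>(i, j)\<in>Sq n. g i j)" for g :: "nat \<Rightarrow> nat \<Rightarrow> 'd::comm_monoid_add" and n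
    by (simp add: Sq_def sum.cartesian_product)
  have triangle: "(\<Sum>k<n. \<Sum>i\<le>k. g i (k - i)) = (\<Sum>(i, j)\<in>Tr n. g i j)" for g :: "nat \<Rightarrow> nat \<Rightarrow> 'd::comm_monoid_add" and n
    by (simp add: Tr_def sum.triangle_reindex)
  define gap where "gap n = (\<Sum>i<n. norm (a i)) * (\<Sum>j<n. norm (b j)) - (\<Sum>k<n. \<Sum>i\<le>k. norm (a i) * norm (b (k - i)))" for n
  have "gap \<longlonglongrightarrow> (\<Sum>k. norm (a k)) * (\<Sum>k. norm (b k)) - (\<Sum>k. norm (a k)) * (\<Sum>k. norm (b k))"
    unfolding gap_def using Cauchy_product_sums[of "\<lambda>k. norm (a k)" "\<lambda>k. norm (b k)"] a b
    by (intro tendsto_diff tendsto_mult summable_LIMSEQ) (auto simp: sums_def)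
  then have gap: "gap \<longlonglongrightarrow> 0"
    by simp
  have bound: "norm (pr (\<Sum>i<n. a i) (\<Sum>j<n. b j) - (\<Sum>k<n. \<Sum>i\<le>k. pr (a i) (b (k - i)))) \<le> K * gap n" for n
  proof -
    have "pr (\<Sum>i<n. a i) (\<Sum>j<n. b j) = (\<Sum>i<n. \<Sum>j<n. pr (a i) (b j))"
      by (subst bounded_bilinear.sum_left[OF pr]) (simp add: bounded_bilinear.sum_right[OF pr])
    then have "pr (\<Sum>i<n. a i) (\<Sum>j<n. b j) - (\<Sum>k<n. \<Sum>i\<le>k. pr (a i) (b (k - i)))
        = (\<Sum>(i, j)\<in>Sq n - Tr n. pr (a i) (b j))"
      by (simp add: square triangle[of "\<lambda>i j. pr (a i) (b j)"] sum_diff Sq)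
    also have "norm \<dots> \<le> K * (\<Sum>(i, j)\<in>Sq n - Tr n. norm (a i) * norm (b j))"
      unfolding sum_distrib_left
      by (rule order_trans[OF norm_sum sum_mono]) (use K(1) in \<open>auto simp: ac_simps\<close>)
    also have "\<dots> = K * gap n"
      by (simp only: gap_def sum_diff[OF Sq] sum_product square triangle[of "\<lambda>i j. norm (a i) * norm (b j)"])
    finally show ?thesis .
  qed
  have diff: "(\<lambda>n. pr (\<Sum>i<n. a i) (\<Sum>j<n. b j) - (\<Sum>k<n. \<Sum>i\<le>k. pr (a i) (b (k - i)))) \<longlonglongrightarrow> 0"
    by (rule Lim_null_comparison[OF always_eventually tendsto_mult_right_zero[OF gap, of K]]) (use bound in blast)
  have "(\<lambda>n. pr (\<Sum>i<n. a i) (\<Sum>j<n. b j)) \<longlonglongrightarrow> pr (\<Sum>k. a k) (\<Sum>k. b k)"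
    by (intro bounded_bilinear.tendsto[OF pr] summable_LIMSEQ summable_norm_cancel[OF a] summable_norm_cancel[OF b])
  from Lim_transform2[OF this diff] show ?thesis
    unfolding sums_def .
qed

lemma power_le_fact_mult_exp:
  assumes "0 \<le> (y::real)" shows "y ^ m \<le> fact m * exp y"
proof -
  have "y ^ m / fact m \<le> (\<Sum>n. y ^ n / fact n)"
    using sum_le_suminf[OF summable_exp_generic[of y], of "{m}"] assms
    by (simp add: divide_inverse_commute)
  then show ?thesis
    by (simp add: exp_def field_simps)
qed

lemma summable_power_mult_poly_over_fact:
  assumes "0 \<le> (c::real)"
  shows "summable (\<lambda>n. c ^ n * (real n + 1) ^ m / fact n)"
proof (rule summable_comparison_test'[OF summable_mult[OF summable_exp[of "c * exp 1"], of "fact m * exp 1"]])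
  fix n :: nat
  have "(real n + 1) ^ m \<le> fact m * exp 1 * exp 1 ^ n"
    using power_le_fact_mult_exp[of "real n + 1" m] by (simp add: exp_add exp_of_nat_mult[symmetric] mult_ac)
  then have "c ^ n / fact n * (real n + 1) ^ m \<le> c ^ n / fact n * (fact m * exp 1 * exp 1 ^ n)"
    using assms by (intro mult_left_mono) auto
  then show "norm (c ^ n * (real n + 1) ^ m / fact n) \<le> fact m * exp 1 * (inverse (fact n) * (c * exp 1) ^ n)"
    using assms by (simp add: power_mult_distrib field_simps)
qed

lemma bounded_linear_funpow:
  fixes f :: "'a::real_normed_vector \<Rightarrow> 'a"
  shows "bounded_linear f \<Longrightarrow> bounded_linear (f ^^ n)"
proof (induction n)
  case (Suc n)
  then show ?case
    using bounded_linear_compose[of f "f ^^ n"] by (simp add: o_def)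
qed (simp add: id_def bounded_linear_ident)

locale bounded_bracket =
  fixes br :: "'a::banach \<Rightarrow> 'a \<Rightarrow> 'a"
  assumes bounded_bilinear_bracket: "bounded_bilinear br"
begin

sublocale bounded_bilinear br
  by (rule bounded_bilinear_bracket)

lemma bounded_linear_ad_power: "bounded_linear (br x ^^ n)"
  using bounded_linear_right by (rule bounded_linear_funpow)

lemma norm_ad_power_le:
  assumes K: "\<And>u v. norm (br u v) \<le> norm u * norm v * K" "0 \<le> K"
  shows "norm ((br x ^^ n) y) \<le> (K * norm x) ^ n * norm y"
proof (induction n)
  case (Suc n)
  have "norm ((br x ^^ Suc n) y) \<le> norm x * norm ((br x ^^ n) y) * K"
    using K(1) by simp
  also have "\<dots> \<le> norm x * ((K * norm x) ^ n * norm y) * K"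
    using Suc.IH K(2) by (intro mult_right_mono mult_left_mono) auto
  finally show ?case
    by (simp add: ac_simps)
qed simp

lemma ad_power_uminus: "(br (- x) ^^ n) y = (- 1) ^ n *\<^sub>R (br x ^^ n) y"
  by (induction n) (simp_all add: minus_left scaleR_right)

definition exp_ad_blinfun :: "'a \<Rightarrow> 'a \<Rightarrow>\<^sub>L 'a" where
  "exp_ad_blinfun x = (\<Sum>n. (1 / fact n) *\<^sub>R Blinfun (br x ^^ n))"

lemma apply_exp_ad_term: "blinfun_apply ((1 / fact n) *\<^sub>R Blinfun (br x ^^ n)) y = (1 / fact n) *\<^sub>R (br x ^^ n) y"
  by (simp add: scaleR_blinfun.rep_eq bounded_linear_Blinfun_apply[OF bounded_linear_ad_power])

lemma summable_norm_exp_ad_blinfun: "summable (\<lambda>n. norm ((1 / fact n) *\<^sub>R Blinfun (br x ^^ n)))"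
proof -
  obtain K where K: "\<And>u v. norm (br u v) \<le> norm u * norm v * K" "0 \<le> K"
    using nonneg_bounded by blast
  have "norm (Blinfun (br x ^^ n)) \<le> (K * norm x) ^ n" for n
    by (rule norm_blinfun_bound) (use K norm_ad_power_le[OF K] in \<open>simp_all add: bounded_linear_Blinfun_apply[OF bounded_linear_ad_power]\<close>)
  then show ?thesis
    by (intro summable_comparison_test'[OF summable_exp[of "K * norm x"]]) (simp add: divide_simps)
qed

lemma exp_ad_sums: "(\<lambda>n. (1 / fact n) *\<^sub>R (br x ^^ n) y) sums exp_ad br x y"
  and apply_exp_ad_blinfun: "blinfun_apply (exp_ad_blinfun x) y = exp_ad br x y"
proof -
  have "(\<lambda>n. blinfun_apply ((1 / fact n) *\<^sub>R Blinfun (br x ^^ n)) y) sums blinfun_apply (exp_ad_blinfun x) y"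
    unfolding exp_ad_blinfun_def
    by (rule bounded_linear.sums[OF bounded_bilinear.bounded_linear_left[OF bounded_bilinear_blinfun_apply]
          summable_sums[OF summable_norm_cancel[OF summable_norm_exp_ad_blinfun]]])
  then show "(\<lambda>n. (1 / fact n) *\<^sub>R (br x ^^ n) y) sums exp_ad br x y"
    and "blinfun_apply (exp_ad_blinfun x) y = exp_ad br x y"
    by (simp_all add: apply_exp_ad_term exp_ad_def sums_iff)
qed

lemma bounded_linear_exp_ad: "bounded_linear (exp_ad br x)"
  using blinfun.bounded_linear_right[of "exp_ad_blinfun x"] by (simp add: apply_exp_ad_blinfun[abs_def])

lemma summable_norm_exp_ad_terms: "summable (\<lambda>n. norm ((1 / fact n) *\<^sub>R (br x ^^ n) y))"
proof (rule summable_comparison_test'[OF summable_mult2[OF summable_norm_exp_ad_blinfun, where c="norm y"]])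
  fix n
  show "norm (norm ((1 / fact n) *\<^sub>R (br x ^^ n) y)) \<le> norm ((1 / fact n) *\<^sub>R Blinfun (br x ^^ n)) * norm y"
    using norm_blinfun[of "(1 / fact n) *\<^sub>R Blinfun (br x ^^ n)" y] by (simp add: apply_exp_ad_term)
qed

lemma exp_ad_single_term:
  assumes "\<And>n. n > 0 \<Longrightarrow> \<phi> ((br x ^^ n) y) = 0" "bounded_linear \<phi>"
  shows "\<phi> (exp_ad br x y) = \<phi> y"
proof -
  have "\<phi> ((1 / fact n) *\<^sub>R (br x ^^ n) y) = (if n = 0 then \<phi> y else 0)" for n
    using assms(1)[of n] by (simp add: linear_scale[OF bounded_linear.linear[OF assms(2)]])
  then have "(\<lambda>n. \<phi> ((1 / fact n) *\<^sub>R (br x ^^ n) y)) sums \<phi> y"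
    using sums_single[of 0 "\<lambda>_. \<phi> y"] by simp
  with bounded_linear.sums[OF assms(2) exp_ad_sums] show ?thesis
    by (rule sums_unique2)
qed

lemma exp_ad_eq_self:
  assumes "br x y = 0" shows "exp_ad br x y = y"
proof -
  have "id (exp_ad br x y) = id y"
  proof (rule exp_ad_single_term)
    fix n :: nat assume "n > 0"
    then obtain m where "n = Suc m"
      using gr0_conv_Suc by blast
    then show "id ((br x ^^ n) y) = 0"
      using assms linear_0[OF bounded_linear.linear[OF bounded_linear_ad_power]]
      by (simp add: funpow_Suc_right del: funpow.simps)
  qed (simp add: id_def bounded_linear_ident)
  then show ?thesis
    by simp
qed

lemma exp_ad_invariant:
  assumes "bounded_linear \<phi>" "\<And>u. \<phi> (br x u) = 0"
  shows "\<phi> (exp_ad br x y) = \<phi> y"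
proof (rule exp_ad_single_term[OF _ assms(1)])
  fix n :: nat assume "n > 0"
  then obtain m where "n = Suc m"
    using gr0_conv_Suc by blast
  then show "\<phi> ((br x ^^ n) y) = 0"
    using assms(2) by simp
qed

text \<open>Cauchy product of the operator series of \<open>exp(ad\<^bsub>-x\<^esub>)\<close> with the vector series of
  \<open>exp(ad\<^sub>x) y\<close>: the \<open>k\<close>-th term carries the alternating binomial sum, which vanishes for \<open>k > 0\<close>.\<close>
lemma exp_ad_uminus_cancel: "exp_ad br (- x) (exp_ad br x y) = y"
proof -
  define a where "a i = (1 / fact i) *\<^sub>R Blinfun (br (- x) ^^ i)" for i
  define b where "b j = (1 / fact j) *\<^sub>R (br x ^^ j) y" for j
  have Cauchy: "(\<lambda>k. \<Sum>i\<le>k. blinfun_apply (a i) (b (k - i))) sums blinfun_apply (\<Sum>i. a i) (\<Sum>j. b j)"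
    by (rule bounded_bilinear_Cauchy_product_sums[OF bounded_bilinear_blinfun_apply])
      (simp_all only: a_def b_def summable_norm_exp_ad_blinfun summable_norm_exp_ad_terms)
  have "(\<Sum>i\<le>k. blinfun_apply (a i) (b (k - i))) = (if k = 0 then y else 0)" for k
  proof -
    have "(\<Sum>i\<le>k. blinfun_apply (a i) (b (k - i))) = (\<Sum>i\<le>k. ((- 1) ^ i * real (k choose i) / fact k) *\<^sub>R (br x ^^ k) y)"
    proof (rule sum.cong[OF refl])
      fix i assume "i \<in> {..k}"
      then have "(br x ^^ i) ((br x ^^ (k - i)) y) = (br x ^^ k) y"
        "(- 1) ^ i / fact i * (1 / fact (k - i)) = ((- 1) ^ i * real (k choose i) / fact k :: real)"
        using funpow_add[of i "k - i" "br x"] by (simp_all add: binomial_fact)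
      then show "blinfun_apply (a i) (b (k - i)) = ((- 1) ^ i * real (k choose i) / fact k) *\<^sub>R (br x ^^ k) y"
        by (simp add: a_def b_def apply_exp_ad_term ad_power_uminus linear_scale[OF bounded_linear.linear[OF bounded_linear_ad_power]])
    qed
    also have "\<dots> = ((\<Sum>i\<le>k. (- 1) ^ i * real (k choose i)) / fact k) *\<^sub>R (br x ^^ k) y"
      by (simp add: scaleR_sum_left[symmetric] sum_divide_distrib)
    also have "\<dots> = (if k = 0 then y else 0)"
      by (simp add: choose_alternating_sum)
    finally show ?thesis .
  qed
  then have "blinfun_apply (\<Sum>i. a i) (\<Sum>j. b j) = y"
    using Cauchy sums_single[of 0 "\<lambda>_. y"] sums_unique2 by force
  moreover have "(\<Sum>i. a i) = exp_ad_blinfun (- x)" "(\<Sum>j. b j) = exp_ad br x y"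
    by (simp_all add: a_def b_def exp_ad_blinfun_def exp_ad_def)
  ultimately show ?thesis
    by (simp add: apply_exp_ad_blinfun)
qed

lemma linear_exp_ad: "linear (exp_ad br x)"
  using bounded_linear_exp_ad by (rule bounded_linear.linear)

lemma exp_ad_cong: "br x = br x' \<Longrightarrow> exp_ad br x = exp_ad br x'"
  unfolding exp_ad_def[abs_def] by simp

lemma ad_power_bracket:
  assumes der: "\<And>u v. br x (br u v) = br (br x u) v + br u (br x v)"
  shows "(br x ^^ n) (br u v) = (\<Sum>i\<le>n. real (n choose i) *\<^sub>R br ((br x ^^ i) u) ((br x ^^ (n - i)) v))"
proof (induction n)
  case (Suc n)
  define Q where "Q i j = br ((br x ^^ i) u) ((br x ^^ j) v)" for i j
  have shift: "(\<Sum>i\<le>Suc n. real (n choose i) *\<^sub>R Q i (Suc n - i))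
      = Q 0 (Suc n) + (\<Sum>i\<le>n. real (n choose Suc i) *\<^sub>R Q (Suc i) (n - i))"
    by (subst sum.atMost_Suc_shift) simp
  have "(br x ^^ Suc n) (br u v) = (\<Sum>i\<le>n. real (n choose i) *\<^sub>R (Q (Suc i) (n - i) + Q i (Suc (n - i))))"
    using Suc.IH by (simp add: Q_def der linear_sum[OF bounded_linear.linear[OF bounded_linear_right]]
        linear_scale[OF bounded_linear.linear[OF bounded_linear_right]])
  also have "\<dots> = (\<Sum>i\<le>n. real (n choose i) *\<^sub>R Q (Suc i) (n - i)) + (\<Sum>i\<le>Suc n. real (n choose i) *\<^sub>R Q i (Suc n - i))"
    by (simp add: scaleR_add_right sum.distrib Suc_diff_le)
  also have "\<dots> = Q 0 (Suc n) + (\<Sum>i\<le>n. real (Suc n choose Suc i) *\<^sub>R Q (Suc i) (n - i))"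
    unfolding shift by (simp add: scaleR_add_left sum.distrib ac_simps)
  also have "\<dots> = (\<Sum>i\<le>Suc n. real (Suc n choose i) *\<^sub>R Q i (Suc n - i))"
    by (subst sum.atMost_Suc_shift) simp
  finally show ?case
    by (simp only: Q_def)
qed simp

lemma exp_ad_bracket:
  assumes der: "\<And>u v. br x (br u v) = br (br x u) v + br u (br x v)"
  shows "exp_ad br x (br u v) = br (exp_ad br x u) (exp_ad br x v)"
proof -
  have "(\<lambda>k. \<Sum>i\<le>k. br ((1 / fact i) *\<^sub>R (br x ^^ i) u) ((1 / fact (k - i)) *\<^sub>R (br x ^^ (k - i)) v))
      sums br (exp_ad br x u) (exp_ad br x v)"
    unfolding exp_ad_def
    by (rule bounded_bilinear_Cauchy_product_sums[OF bounded_bilinear_bracket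
          summable_norm_exp_ad_terms summable_norm_exp_ad_terms])
  moreover have "(\<Sum>i\<le>k. br ((1 / fact i) *\<^sub>R (br x ^^ i) u) ((1 / fact (k - i)) *\<^sub>R (br x ^^ (k - i)) v))
      = (1 / fact k) *\<^sub>R (br x ^^ k) (br u v)" for k
  proof -
    have "(1 / fact k) *\<^sub>R (br x ^^ k) (br u v)
        = (\<Sum>i\<le>k. (1 / fact k * real (k choose i)) *\<^sub>R br ((br x ^^ i) u) ((br x ^^ (k - i)) v))"
      by (simp add: ad_power_bracket[OF der] scaleR_sum_right)
    also have "\<dots> = (\<Sum>i\<le>k. br ((1 / fact i) *\<^sub>R (br x ^^ i) u) ((1 / fact (k - i)) *\<^sub>R (br x ^^ (k - i)) v))"
    proof (rule sum.cong[OF refl])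
      fix i assume "i \<in> {..k}"
      then have "1 / fact k * real (k choose i) = 1 / fact i * (1 / fact (k - i))"
        by (simp add: binomial_fact)
      then show "(1 / fact k * real (k choose i)) *\<^sub>R br ((br x ^^ i) u) ((br x ^^ (k - i)) v)
          = br ((1 / fact i) *\<^sub>R (br x ^^ i) u) ((1 / fact (k - i)) *\<^sub>R (br x ^^ (k - i)) v)"
        by (simp add: scaleR_left scaleR_right)
    qed
    finally show ?thesis ..
  qed
  ultimately show ?thesis
    using exp_ad_sums[of x "br u v"] by (simp add: sums_unique2)
qed

lemma exp_ad_exp_ad:
  assumes der: "\<And>u v. br x (br u v) = br (br x u) v + br u (br x v)"
  shows "exp_ad br (exp_ad br x y) (exp_ad br x w) = exp_ad br x (exp_ad br y w)"
proof -
  have power: "(br (exp_ad br x y) ^^ n) (exp_ad br x w) = exp_ad br x ((br y ^^ n) w)" for n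
    by (induction n) (simp_all add: exp_ad_bracket[OF der])
  have "(\<lambda>n. (1 / fact n) *\<^sub>R (br (exp_ad br x y) ^^ n) (exp_ad br x w))
      = (\<lambda>n. exp_ad br x ((1 / fact n) *\<^sub>R (br y ^^ n) w))"
    by (simp add: power linear_scale[OF bounded_linear.linear[OF bounded_linear_exp_ad]])
  then show ?thesis
    using exp_ad_sums[of "exp_ad br x y" "exp_ad br x w"] bounded_linear.sums[OF bounded_linear_exp_ad exp_ad_sums]
    by (simp add: sums_unique2)
qed

primrec ad_power_tower :: "nat \<Rightarrow> ('a \<times> 'a) list \<Rightarrow> 'a \<times> 'a \<Rightarrow> 'a" where
  "ad_power_tower 0 = linear_tower snd"
| "ad_power_tower (Suc n) = (\<lambda>vs. product_tower br (linear_tower fst) (ad_power_tower n) (rev vs))"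

lemma derivative_tower_ad_power_tower: "derivative_tower (ad_power_tower n)"
proof (induction n)
  case 0
  show ?case
    by (simp add: derivative_tower_linear_tower bounded_linear_snd)
next
  case (Suc n)
  then show ?case
    by (simp add: derivative_tower_product_tower[OF bounded_bilinear_bracket
          derivative_tower_linear_tower[OF bounded_linear_fst]])
qed

lemma ad_power_tower_Nil: "ad_power_tower n [] p = (br (fst p) ^^ n) (snd p)"
  by (induction n) auto

lemma norm_ad_power_tower_le:
  assumes K: "0 \<le> K" "\<And>u v. norm (br u v) \<le> norm u * norm v * K"
    and p: "norm p \<le> \<rho>" "1 \<le> \<rho>"
  shows "norm (ad_power_tower n us p) \<le> K ^ n * \<rho> ^ (n + 1) * (real n + 1) ^ length us * prod_list (map norm us)"
proof -
  have "norm (fst v) \<le> norm v" "norm (snd v) \<le> norm v" for v :: "'a \<times> 'a"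
    by (metis norm_fst_le norm_snd_le prod.collapse)+
  note fst_le = norm_linear_tower_le[OF bounded_linear_fst this(1) p]
    and snd_le = norm_linear_tower_le[OF bounded_linear_snd this(2) p]
  show ?thesis
  proof (induction n arbitrary: us)
    case (Suc n)
    from norm_product_tower_le[where pr=br and Df="linear_tower fst" and Dg="ad_power_tower n" and x=p,
        OF K fst_le Suc.IH, of "rev us"] show ?case
      by (simp add: rev_map[symmetric] algebra_simps)
  qed (use snd_le in simp)
qed

definition exp_ad_tower :: "('a \<times> 'a) list \<Rightarrow> 'a \<times> 'a \<Rightarrow> 'a" where
  "exp_ad_tower vs p = (\<Sum>n. (1 / fact n) *\<^sub>R ad_power_tower n vs p)"

lemma derivative_tower_exp_ad_tower: "derivative_tower exp_ad_tower"
  unfolding exp_ad_tower_def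
proof (rule derivative_tower_suminf)
  show "derivative_tower (\<lambda>vs p. (1 / fact n) *\<^sub>R ad_power_tower n vs p)" for n
    by (rule derivative_tower_compose_left[OF derivative_tower_ad_power_tower bounded_linear_scaleR_right])
  fix R :: real and m :: nat
  obtain K where K: "0 \<le> K" "\<And>u v. norm (br u v) \<le> norm u * norm v * K"
    using nonneg_bounded by (metis mult.commute)
  define \<rho> where "\<rho> = max 1 R"
  have \<rho>: "1 \<le> \<rho>" "0 \<le> K * \<rho>"
    using K(1) by (auto simp: \<rho>_def)
  show "\<exists>M. summable M \<and> (\<forall>n p us. norm p \<le> R \<longrightarrow> length us = m \<longrightarrow>
      norm ((1 / fact n) *\<^sub>R ad_power_tower n us p) \<le> M n * prod_list (map norm us))"
  proof (intro exI conjI allI impI)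
    show "summable (\<lambda>n. \<rho> * ((K * \<rho>) ^ n * (real n + 1) ^ m / fact n))"
      by (intro summable_mult summable_power_mult_poly_over_fact \<rho>(2))
    fix n and p :: "'a \<times> 'a" and us :: "('a \<times> 'a) list"
    assume "norm p \<le> R" "length us = m"
    then have "norm p \<le> \<rho>" "length us = m"
      by (auto simp: \<rho>_def)
    from norm_ad_power_tower_le[OF K this(1) \<rho>(1), of n us] this(2)
    have "norm (ad_power_tower n us p) / fact n \<le> K ^ n * \<rho> ^ (n + 1) * (real n + 1) ^ m * prod_list (map norm us) / fact n"
      by (simp add: divide_right_mono)
    also have "\<dots> = \<rho> * ((K * \<rho>) ^ n * (real n + 1) ^ m / fact n) * prod_list (map norm us)"
      by (simp add: power_mult_distrib)
    finally show "norm ((1 / fact n) *\<^sub>R ad_power_tower n us p) \<le> \<rho> * ((K * \<rho>) ^ n * (real n + 1) ^ m / fact n) * prod_list (map norm us)"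
      by simp
  qed
qed

lemma smooth_exp_ad: "smooth (\<lambda>p. exp_ad br (fst p) (snd p))"
proof (rule smoothI[OF derivative_tower_exp_ad_tower])
  show "exp_ad_tower [] = (\<lambda>p. exp_ad br (fst p) (snd p))"
    by (simp add: fun_eq_iff exp_ad_tower_def exp_ad_def ad_power_tower_Nil)
qed

lemma has_derivative_exp_ad_at_0: "((\<lambda>x. exp_ad br x y) has_derivative (\<lambda>h. br h y)) (at 0)"
proof -
  have ad_zero: "(br 0 ^^ n) y = (if n = 0 then y else 0)" for n
    by (induction n) (simp_all add: zero_left)
  have "ad_power_tower n [(h, 0)] (0, y) = (if n = 1 then br h y else 0)" for n h
    by (cases n) (simp_all add: ad_zero ad_power_tower_Nil zero_left zero_right)
  then have "(\<lambda>n. (1 / fact n) *\<^sub>R ad_power_tower n [(h, 0)] (0, y)) = (\<lambda>n. if n = 1 then br h y else 0)" for h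
    by auto
  then have tower_1: "exp_ad_tower [(h, 0)] (0, y) = br h y" for h
    using sums_single[of 1 "\<lambda>_. br h y"] by (simp add: exp_ad_tower_def sums_iff)
  have "(exp_ad_tower [] has_derivative (\<lambda>v. exp_ad_tower [v] (0, y))) (at (0, y))"
    using derivative_tower_exp_ad_tower unfolding derivative_tower_def by blast
  from diff_chain_at[OF has_derivative_Pair[OF has_derivative_ident has_derivative_const] this]
  have "((\<lambda>x. exp_ad_tower [] (x, y)) has_derivative (\<lambda>h. br h y)) (at 0)"
    by (simp add: o_def tower_1)
  moreover have "exp_ad_tower [] (x, y) = exp_ad br x y" for x
    by (simp add: exp_ad_tower_def exp_ad_def ad_power_tower_Nil)
  ultimately show ?thesis
    by simp
qed

end

section \<open>The twisted rack\<close>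

text \<open>The functionals \<open>\<alpha> j\<close> and \<open>\<beta> j\<close> stand for \<open>\<langle>-, a\<^sub>j\<rangle>\<close> and \<open>\<langle>-, b\<^sub>j\<rangle>\<close>.\<close>
locale twisted_exp_ad_rack = bounded_bracket br
  for br :: "'a::banach \<Rightarrow> 'a \<Rightarrow> 'a" +
  fixes k :: nat and \<alpha> \<beta> :: "nat \<Rightarrow> 'a \<Rightarrow> real" and z :: "nat \<Rightarrow> 'a" and f :: "nat \<Rightarrow> real \<Rightarrow> real"
  assumes left_leibniz_identity: "br u (br v w) = br (br u v) w + br v (br u w)"
    and bounded_linear_\<alpha>: "j < k \<Longrightarrow> bounded_linear (\<alpha> j)"
    and bounded_linear_\<beta>: "j < k \<Longrightarrow> bounded_linear (\<beta> j)"
    and \<alpha>_bracket: "j < k \<Longrightarrow> \<alpha> j (br u v) = 0"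
    and \<beta>_bracket: "j < k \<Longrightarrow> \<beta> j (br u v) = 0"
    and \<alpha>_z: "i < k \<Longrightarrow> j < k \<Longrightarrow> \<alpha> j (z i) = 0"
    and \<beta>_z: "i < k \<Longrightarrow> j < k \<Longrightarrow> \<beta> j (z i) = 0"
    and z_center: "j < k \<Longrightarrow> z j \<in> center br"
    and f_zero: "j < k \<Longrightarrow> f j 0 = 0"
begin

definition twist :: "'a \<Rightarrow> 'a \<Rightarrow> 'a" where
  "twist x y = (\<Sum>j<k. (\<beta> j y * f j (\<alpha> j x)) *\<^sub>R z j)"

definition twisted_op :: "'a \<Rightarrow> 'a \<Rightarrow> 'a" where
  "twisted_op x y = exp_ad br x y + twist x y"

lemma bounded_linear_twist: "bounded_linear (twist x)"
  unfolding twist_def[abs_def]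
proof (rule bounded_linear_sum)
  fix j assume "j \<in> {..<k}"
  then show "bounded_linear (\<lambda>y. (\<beta> j y * f j (\<alpha> j x)) *\<^sub>R z j)"
    by (intro bounded_linear_compose[OF bounded_linear_scaleR_left] bounded_linear_mult_const bounded_linear_\<beta>) simp
qed

lemma twist_center: "twist x y \<in> center br"
proof -
  have "br (twist x y) u = 0" "br u (twist x y) = 0" for u
    using z_center by (simp_all add: twist_def center_def sum_left sum_right scaleR_left scaleR_right)
  then show ?thesis
    by (simp add: center_def)
qed

lemma exp_ad_twist: "exp_ad br u (twist x y) = twist x y"
  using twist_center by (intro exp_ad_eq_self) (simp add: center_def)

lemma twist_functionals:
  assumes "j < k" shows "\<alpha> j (twist x y) = 0" "\<beta> j (twist x y) = 0"
proof -
  interpret \<alpha>: bounded_linear "\<alpha> j" by (rule bounded_linear_\<alpha>[OF assms])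
  interpret \<beta>: bounded_linear "\<beta> j" by (rule bounded_linear_\<beta>[OF assms])
  show "\<alpha> j (twist x y) = 0" "\<beta> j (twist x y) = 0"
    using assms by (simp_all add: twist_def \<alpha>.sum \<beta>.sum \<alpha>.scale \<beta>.scale \<alpha>_z \<beta>_z)
qed

lemma twisted_op_functionals:
  assumes "j < k" shows "\<alpha> j (twisted_op x y) = \<alpha> j y" "\<beta> j (twisted_op x y) = \<beta> j y"
proof -
  interpret \<alpha>: bounded_linear "\<alpha> j" by (rule bounded_linear_\<alpha>[OF assms])
  interpret \<beta>: bounded_linear "\<beta> j" by (rule bounded_linear_\<beta>[OF assms])
  show "\<alpha> j (twisted_op x y) = \<alpha> j y" "\<beta> j (twisted_op x y) = \<beta> j y"
    using assms by (simp_all add: twisted_op_def \<alpha>.add \<beta>.add twist_functionals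
        exp_ad_invariant[OF bounded_linear_\<alpha> \<alpha>_bracket] exp_ad_invariant[OF bounded_linear_\<beta> \<beta>_bracket])
qed

lemma twist_cong:
  "(\<And>j. j < k \<Longrightarrow> \<alpha> j x = \<alpha> j x') \<Longrightarrow> (\<And>j. j < k \<Longrightarrow> \<beta> j y = \<beta> j y') \<Longrightarrow> twist x y = twist x' y'"
  unfolding twist_def by (intro sum.cong) auto

lemma twisted_op_self_distrib:
  "twisted_op x (twisted_op y w) = twisted_op (twisted_op x y) (twisted_op x w)"
proof -
  have twist: "twist x (twisted_op y w) = twist x w" "twist (twisted_op x y) (twisted_op x w) = twist y w"
    by (auto intro: twist_cong simp: twisted_op_functionals)
  have "exp_ad br (twisted_op x y) = exp_ad br (exp_ad br x y)"
    using twist_center by (intro exp_ad_cong) (simp add: fun_eq_iff twisted_op_def add_left center_def)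
  moreover have "exp_ad br u (twisted_op v w) = exp_ad br u (exp_ad br v w) + twist v w" for u v w
    by (simp add: twisted_op_def linear_add[OF linear_exp_ad] exp_ad_twist)
  ultimately show ?thesis
    unfolding twisted_op_def[of x "twisted_op y w"] twisted_op_def[of "twisted_op x y"] twist
    by (simp add: exp_ad_exp_ad[OF left_leibniz_identity] ac_simps)
qed

lemma twisted_op_inverse:
  "twisted_op x (exp_ad br (- x) y - twist x y) = y"
  "exp_ad br (- x) (twisted_op x y) - twist x (twisted_op x y) = y"
proof -
  have "\<beta> j (exp_ad br (- x) y - twist x y) = \<beta> j y" if "j < k" for j
    using that exp_ad_invariant[OF bounded_linear_\<beta> \<beta>_bracket]
    by (simp add: linear_diff[OF bounded_linear.linear[OF bounded_linear_\<beta>]] twist_functionals)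
  then have "twist x (exp_ad br (- x) y - twist x y) = twist x y" "twist x (twisted_op x y) = twist x y"
    by (auto intro: twist_cong simp: twisted_op_functionals)
  then show "twisted_op x (exp_ad br (- x) y - twist x y) = y"
    "exp_ad br (- x) (twisted_op x y) - twist x (twisted_op x y) = y"
    using exp_ad_uminus_cancel[of "- x" y] exp_ad_uminus_cancel[of x y]
    by (simp_all add: twisted_op_def linear_diff[OF linear_exp_ad] linear_add[OF linear_exp_ad] exp_ad_twist)
qed

lemma rack_twisted_op: "rack twisted_op"
proof -
  have "bij (twisted_op x)" for x
    by (rule o_bij[where g="\<lambda>y. exp_ad br (- x) y - twist x y"]) (simp_all add: fun_eq_iff twisted_op_inverse)
  then show ?thesis
    using twisted_op_self_distrib unfolding rack_def by blast
qed

lemma pointed_at_twisted_op: "pointed_at twisted_op 0"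
proof -
  have "twist 0 y = 0" for y
    using linear_0[OF bounded_linear.linear[OF bounded_linear_\<alpha>]] by (simp add: twist_def f_zero)
  moreover have "twist x 0 = 0" for x
    using linear_0[OF bounded_linear.linear[OF bounded_linear_\<beta>]] by (simp add: twist_def)
  ultimately show ?thesis
    by (simp add: pointed_at_def twisted_op_def fun_eq_iff exp_ad_eq_self zero_left
        linear_0[OF linear_exp_ad])
qed

lemma smooth_twisted_op:
  assumes "\<And>j. j < k \<Longrightarrow> smooth (f j)"
  shows "smooth (\<lambda>p. twisted_op (fst p) (snd p))"
  unfolding twisted_op_def twist_def
proof (intro smooth_add[OF smooth_exp_ad] smooth_sum)
  fix j assume "j \<in> {..<k}"
  then have j: "j < k" by simp
  from smooth_bounded_bilinear[OF bounded_bilinear_mult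
      smooth_bounded_linear[OF bounded_linear_compose[OF bounded_linear_\<beta>[OF j] bounded_linear_snd]]
      smooth_compose_right[OF assms[OF j] bounded_linear_compose[OF bounded_linear_\<alpha>[OF j] bounded_linear_fst]]]
  show "smooth (\<lambda>p. (\<beta> j (snd p) * f j (\<alpha> j (fst p))) *\<^sub>R z j)"
    by (rule smooth_compose_left) (rule bounded_linear_scaleR_left)
qed

lemma linear_lie_rack_twisted_op:
  assumes "\<And>j. j < k \<Longrightarrow> smooth (f j)"
  shows "linear_lie_rack twisted_op"
proof -
  have "inv (twisted_op x) = (\<lambda>y. exp_ad br (- x) y - twist x y)" for x
    by (rule inv_unique_comp) (simp_all add: fun_eq_iff twisted_op_inverse)
  then have "bounded_linear (inv (twisted_op x))" for x
    by (simp add: bounded_linear_sub bounded_linear_exp_ad bounded_linear_twist)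
  moreover have "bounded_linear (twisted_op x)" for x
    unfolding twisted_op_def[abs_def] by (intro bounded_linear_add bounded_linear_exp_ad bounded_linear_twist)
  ultimately show ?thesis
    using rack_twisted_op smooth_twisted_op[OF assms] pointed_at_twisted_op
    by (simp add: linear_lie_rack_def lie_rack_def smooth_bounded_linear bounded_linear.linear)
qed

lemma has_derivative_twist:
  assumes f': "\<And>j. j < k \<Longrightarrow> (f j has_real_derivative 0) (at 0)"
    and c: "(c has_derivative c') (at s)" "c s = 0"
  shows "((\<lambda>t. twist (c t) y) has_derivative (\<lambda>_. 0)) (at s)"
  unfolding twist_def
proof (rule has_derivative_eq_rhs[OF has_derivative_sum])
  fix j assume "j \<in> {..<k}"
  then have j: "j < k" by simp
  have "(f j has_derivative (*) 0) (at (\<alpha> j (c s)))"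
    using f'[OF j] c(2) linear_0[OF bounded_linear.linear[OF bounded_linear_\<alpha>[OF j]]]
    by (simp add: has_field_derivative_def)
  then have "(f j has_derivative (\<lambda>h. 0)) (at (\<alpha> j (c s)))"
    by (rule has_derivative_eq_rhs) auto
  from diff_chain_at[OF bounded_linear.has_derivative[OF bounded_linear_\<alpha>[OF j] c(1)] this]
  have "((\<lambda>t. f j (\<alpha> j (c t))) has_derivative (\<lambda>_. 0)) (at s)"
    by (simp add: o_def)
  then show "((\<lambda>t. (\<beta> j y * f j (\<alpha> j (c t))) *\<^sub>R z j) has_derivative (\<lambda>_. 0)) (at s)"
    by (auto intro!: derivative_eq_intros)
qed simp

lemma is_rack_bracket_twisted_op:
  assumes "\<And>j. j < k \<Longrightarrow> (f j has_real_derivative 0) (at 0)"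
  shows "is_rack_bracket twisted_op br"
  unfolding is_rack_bracket_def
proof (intro allI impI)
  fix u v and c :: "real \<Rightarrow> 'a"
  assume "smooth c \<and> c 0 = 0 \<and> (c has_vector_derivative u) (at 0)"
  then have c: "(c has_derivative (\<lambda>t. t *\<^sub>R u)) (at 0)" "c 0 = 0"
    by (auto simp: has_vector_derivative_def)
  have "((\<lambda>x. exp_ad br x v) has_derivative (\<lambda>h. br h v)) (at (c 0))"
    using has_derivative_exp_ad_at_0 c(2) by simp
  from diff_chain_at[OF c(1) this]
  have "((\<lambda>t. exp_ad br (c t) v) has_derivative (\<lambda>t. t *\<^sub>R br u v)) (at 0)"
    by (simp add: c(2) o_def scaleR_left)
  from has_derivative_add[OF this has_derivative_twist[OF assms c]]
  show "((\<lambda>t. twisted_op (c t) v) has_vector_derivative br u v) (at 0)"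
    by (simp add: twisted_op_def has_vector_derivative_def)
qed

end

lemma twisted_exp_ad_rack_of_scalar_product:
  fixes br :: "'a::euclidean_space \<Rightarrow> 'a \<Rightarrow> 'a"
  assumes "left_leibniz br" "scalar_product sp"
    and "\<forall>j<k. a j \<in> orth sp (derived br) \<inter> orth sp (center br)"
    and "\<forall>j<k. b j \<in> orth sp (derived br) \<inter> orth sp (center br)"
    and "\<forall>j<k. z j \<in> center br"
    and "\<forall>j<k. f j 0 = 0"
  shows "twisted_exp_ad_rack br k (\<lambda>j x. sp x (a j)) (\<lambda>j y. sp y (b j)) z f"
proof -
  have br: "bounded_bilinear br" "br u (br v w) = br (br u v) w + br v (br u w)" for u v w
    using assms(1) bilinear_conv_bounded_bilinear unfolding left_leibniz_def by blast+
  have sp: "bounded_bilinear sp" "sp x y = sp y x" for x y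
    using assms(2) bilinear_conv_bounded_bilinear unfolding scalar_product_def by blast+
  have orth: "sp d (a j) = 0" "sp d (b j) = 0" if "j < k" "d \<in> derived br \<union> center br" for d j
    using assms(3,4) that by (auto simp: orth_def sp(2))
  have "br u v \<in> derived br" for u v
    unfolding derived_def by (rule span_base) blast
  show ?thesis
  proof (intro twisted_exp_ad_rack.intro bounded_bracket.intro twisted_exp_ad_rack_axioms.intro)
    show "bounded_bilinear br" "br u (br v w) = br (br u v) w + br v (br u w)" for u v w
      by (fact br)+
    show "bounded_linear (\<lambda>x. sp x (a j))" "bounded_linear (\<lambda>y. sp y (b j))" for j
      using sp(1) by (rule bounded_bilinear.bounded_linear_left)+
    show "sp (br u v) (a j) = 0" "sp (br u v) (b j) = 0" if "j < k" for u v j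
      using orth that \<open>br u v \<in> derived br\<close> by blast+
    show "sp (z i) (a j) = 0" "sp (z i) (b j) = 0" if "i < k" "j < k" for i j
      using orth that assms(5) by blast+
  qed (use assms(5,6) in blast)+
qed

theorem proposition3:
  fixes br :: "'a::euclidean_space \<Rightarrow> 'a \<Rightarrow> 'a"
    and sp :: "'a \<Rightarrow> 'a \<Rightarrow> real"
    and k :: nat
    and a b z :: "nat \<Rightarrow> 'a"
    and f :: "nat \<Rightarrow> real \<Rightarrow> real"
  assumes "left_leibniz br"
    and "scalar_product sp"
    and "\<forall>j<k. a j \<in> orth sp (derived br) \<inter> orth sp (center br)"
    and "\<forall>j<k. b j \<in> orth sp (derived br) \<inter> orth sp (center br)"
    and "\<forall>j<k. z j \<in> center br"
    and "\<forall>j<k. smooth (f j) \<and> f j 0 = 0"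
  shows "linear_lie_rack
           (\<lambda>x y. exp_ad br x y + (\<Sum>j<k. (sp y (b j) * f j (sp x (a j))) *\<^sub>R z j))
         \<and> ((\<forall>j<k. deriv (f j) 0 = 0) \<longrightarrow>
            is_rack_bracket
              (\<lambda>x y. exp_ad br x y + (\<Sum>j<k. (sp y (b j) * f j (sp x (a j))) *\<^sub>R z j)) br)"
proof -
  interpret twisted_exp_ad_rack br k "\<lambda>j x. sp x (a j)" "\<lambda>j y. sp y (b j)" z f
    using twisted_exp_ad_rack_of_scalar_product[OF assms(1-5)] assms(6) by blast
  have op: "(\<lambda>x y. exp_ad br x y + (\<Sum>j<k. (sp y (b j) * f j (sp x (a j))) *\<^sub>R z j)) = twisted_op"
    by (simp add: fun_eq_iff twisted_op_def twist_def)
  have "(f j has_real_derivative deriv (f j) 0) (at 0)" if "j < k" for j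
    using assms(6) that smooth_imp_differentiable DERIV_deriv_iff_real_differentiable by blast
  then show ?thesis
    unfolding op using assms(6) linear_lie_rack_twisted_op is_rack_bracket_twisted_op by metis
qed

end
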